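(* For every even $m\ge 2$ and every $n\ge 2$, the $m$th order $n$-dimensional Pascal tensor is positive definite.
   Context: The $m$th order $n$-dimensional Pascal tensor is $\mathcal{P}=(p_{i_1\dots i_m})$ with $p_{i_1\dots i_m}=\frac{(i_1+\dots+i_m-m)!}{(i_1-1)!\cdots(i_m-1)!}$ for $i_1,\dots,i_m\in\{1,\dots,n\}$ (for $m=2$ this is the symmetric Pascal matrix). For $m$ even, a symmetric tensor $\mathcal{A}$ is positive definite if $\mathcal{A}\mathbf{x}^m=\sum_{i_1,\dots,i_m}a_{i_1\dots i_m}x_{i_1}\cdots x_{i_m}>0$ for all nonzero $\mathbf{x}\in\mathbb{R}^n$. *)

theory Defs
  imports "HOL-Analysis.Analysis" "HOL-Library.FuncSet"
begin

text \<open>Indices are shifted to be 0-based: an index tuple (i_1,...,i_m) with i_k in {1..n}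
  is represented by a function idx on {0..<m} with idx k = i_(k+1) - 1 in {0..<n}.
  Then p_{i_1...i_m} = (i_1+...+i_m-m)! / ((i_1-1)!...(i_m-1)!)
  = (sum of idx)! / prod of (idx k)!.\<close>

definition pascal_tensor :: "nat \<Rightarrow> (nat \<Rightarrow> nat) \<Rightarrow> real" where
  "pascal_tensor m idx = fact (\<Sum>k<m. idx k) / (\<Prod>k<m. fact (idx k))"

definition tensor_form :: "nat \<Rightarrow> nat \<Rightarrow> ((nat \<Rightarrow> nat) \<Rightarrow> real) \<Rightarrow> (nat \<Rightarrow> real) \<Rightarrow> real" where
  "tensor_form m n A x = (\<Sum>idx \<in> {..<m} \<rightarrow>\<^sub>E {..<n}. A idx * (\<Prod>k<m. x (idx k)))"

definition positive_definite_tensor :: "nat \<Rightarrow> nat \<Rightarrow> ((nat \<Rightarrow> nat) \<Rightarrow> real) \<Rightarrow> bool" where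
  "positive_definite_tensor m n A \<longleftrightarrow>
     (\<forall>x::nat \<Rightarrow> real. (\<exists>i<n. x i \<noteq> 0) \<longrightarrow> tensor_form m n A x > 0)"

end

theory Submission
  imports Defs "HOL-Computational_Algebra.Polynomial"
begin

text \<open>Put \<open>y\<^sub>i = x\<^sub>i / i!\<close> and \<open>p(t) = \<Sum>\<^sub>i y\<^sub>i t\<^sup>i\<close>. Expanding \<open>p\<^sup>m\<close> shows that the form
  \<open>\<P>x\<^sup>m\<close> equals \<open>L(p\<^sup>m)\<close>, where \<open>L\<close> is the linear functional \<open>t\<^sup>s \<mapsto> s!\<close>. For
  \<open>m = 2r\<close> this is \<open>L(q\<^sup>2)\<close> with \<open>q = p\<^sup>r \<noteq> 0\<close>, a quadratic form in the coefficients of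
  \<open>q\<close> with Hankel matrix \<open>((a+b)!)\<close>. Vandermonde's identity
  \<open>(a+b)! = a! b! \<Sum>\<^sub>j C(a,j) C(b,j)\<close> writes it as \<open>\<Sum>\<^sub>j G\<^sub>j\<^sup>2\<close> with
  \<open>G\<^sub>j = \<Sum>\<^sub>a a! C(a,j) q\<^sub>a\<close>, and by triangularity the top term \<open>G\<^sub>d = d! lead(q)\<close>, \<open>d = deg q\<close>,
  is nonzero.\<close>

lemma fact_add_eq_sum_choose_products:
  fixes a b d :: nat
  assumes "b \<le> d"
  shows "fact (a + b) = fact a * fact b * (\<Sum>j\<le>d. (a choose j) * (b choose j))"
proof -
  have "(\<Sum>j\<le>d. (a choose j) * (b choose j)) = (\<Sum>j\<le>b. (a choose j) * (b choose j))"
    using assms by (intro sum.mono_neutral_right) auto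
  also have "\<dots> = (\<Sum>j\<le>b. (a choose j) * (b choose (b - j)))"
    by (intro sum.cong refl) (simp add: binomial_symmetric[symmetric])
  also have "\<dots> = (a + b) choose b"
    by (rule vandermonde)
  finally show ?thesis
    using binomial_fact_lemma[of b "a + b"] by (simp add: mult_ac)
qed

lemma hankel_factorial_sum_of_squares:
  fixes c :: "nat \<Rightarrow> 'a::{comm_semiring_1,semiring_char_0}"
  shows "(\<Sum>a\<le>d. \<Sum>b\<le>d. fact (a + b) * c a * c b)
       = (\<Sum>j\<le>d. (\<Sum>a\<le>d. fact a * of_nat (a choose j) * c a)\<^sup>2)"
proof -
  define X where "X a j = fact a * of_nat (a choose j) * c a" for a j
  have "fact (a + b) * c a * c b = (\<Sum>j\<le>d. X a j * X b j)" if "b \<le> d" for a b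
  proof -
    have "(fact (a + b) :: 'a) = fact a * fact b * (\<Sum>j\<le>d. of_nat (a choose j) * of_nat (b choose j))"
      using arg_cong[OF fact_add_eq_sum_choose_products[OF that, of a], of "of_nat :: nat \<Rightarrow> 'a"]
      by (simp add: of_nat_sum of_nat_fact)
    then show ?thesis
      unfolding X_def by (simp add: sum_distrib_left sum_distrib_right) (simp only: mult_ac)
  qed
  then have "(\<Sum>a\<le>d. \<Sum>b\<le>d. fact (a + b) * c a * c b) = (\<Sum>a\<le>d. \<Sum>b\<le>d. \<Sum>j\<le>d. X a j * X b j)"
    by (intro sum.cong refl) simp
  also have "\<dots> = (\<Sum>a\<le>d. \<Sum>j\<le>d. \<Sum>b\<le>d. X a j * X b j)"
    by (rule sum.cong[OF refl]) (rule sum.swap)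
  also have "\<dots> = (\<Sum>j\<le>d. \<Sum>a\<le>d. \<Sum>b\<le>d. X a j * X b j)"
    by (rule sum.swap)
  also have "\<dots> = (\<Sum>j\<le>d. (\<Sum>a\<le>d. X a j)\<^sup>2)"
    by (simp only: power2_eq_square sum_product)
  finally show ?thesis
    unfolding X_def .
qed

text \<open>\<open>factorial_moment p = \<integral>\<^sub>0\<^sup>\<infinity> p(t) e\<^sup>-\<^sup>t dt\<close>, written algebraically.\<close>

definition factorial_moment :: "'a::{comm_semiring_1,semiring_char_0} poly \<Rightarrow> 'a" where
  "factorial_moment p = (\<Sum>i\<le>degree p. fact i * coeff p i)"

lemma factorial_moment_eq:
  assumes "degree p \<le> N"
  shows "factorial_moment p = (\<Sum>i\<le>N. fact i * coeff p i)"
  unfolding factorial_moment_def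
  using assms by (intro sum.mono_neutral_left) (auto simp: coeff_eq_0)

lemma factorial_moment_0 [simp]: "factorial_moment 0 = 0"
  by (simp add: factorial_moment_def)

lemma factorial_moment_add: "factorial_moment (p + q) = factorial_moment p + factorial_moment q"
proof -
  define N where "N = max (degree p) (degree q)"
  have "degree (p + q) \<le> N" unfolding N_def by (rule degree_add_le_max)
  then show ?thesis
    by (simp add: factorial_moment_eq[of _ N] N_def sum.distrib distrib_left)
qed

lemma factorial_moment_sum: "factorial_moment (\<Sum>x\<in>A. p x) = (\<Sum>x\<in>A. factorial_moment (p x))"
  by (induction A rule: infinite_finite_induct)
     (simp_all add: factorial_moment_add)

lemma factorial_moment_monom [simp]: "factorial_moment (monom c n) = fact n * c"
  by (simp add: factorial_moment_eq[OF degree_monom_le] if_distrib[of "(*) (fact _)"] cong: if_cong)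

lemma factorial_moment_mult:
  "factorial_moment (p * q)
     = (\<Sum>a\<le>degree p. \<Sum>b\<le>degree q. fact (a + b) * coeff p a * coeff q b)"
proof -
  have "p * q = (\<Sum>a\<le>degree p. \<Sum>b\<le>degree q. monom (coeff p a * coeff q b) (a + b))"
    by (subst (1 2) poly_as_sum_of_monoms[symmetric])
       (simp add: sum_product mult_monom)
  then show ?thesis
    by (simp add: factorial_moment_sum mult_ac)
qed

lemma factorial_moment_square_pos:
  fixes q :: "'a::linordered_idom poly"
  assumes "q \<noteq> 0"
  shows "factorial_moment (q * q) > 0"
proof -
  define d where "d = degree q"
  define G where "G j = (\<Sum>a\<le>d. fact a * of_nat (a choose j) * coeff q a)" for j
  have "G d = (\<Sum>a\<in>{d}. fact a * of_nat (a choose d) * coeff q a)"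
    unfolding G_def by (intro sum.mono_neutral_right) auto
  then have "G d = fact d * lead_coeff q"
    by (simp add: d_def)
  then have "0 < (G d)\<^sup>2"
    using assms by simp
  also have "\<dots> \<le> (\<Sum>j\<le>d. (G j)\<^sup>2)"
    by (rule member_le_sum) auto
  also have "\<dots> = factorial_moment (q * q)"
    by (simp add: factorial_moment_mult hankel_factorial_sum_of_squares G_def d_def)
  finally show ?thesis .
qed

lemma prod_monom: "(\<Prod>k\<in>A. monom (c k) (e k)) = monom (\<Prod>k\<in>A. c k) (\<Sum>k\<in>A. e k)"
  by (induction A rule: infinite_finite_induct) (simp_all add: mult_monom monom_0 one_pCons)

lemma power_sum_monoms:
  fixes c :: "nat \<Rightarrow> 'a::comm_semiring_1"
  assumes "finite I"
  shows "(\<Sum>i\<in>I. monom (c i) i) ^ m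
       = (\<Sum>idx\<in>{..<m} \<rightarrow>\<^sub>E I. monom (\<Prod>k<m. c (idx k)) (\<Sum>k<m. idx k))"
proof -
  have "(\<Sum>i\<in>I. monom (c i) i) ^ m = (\<Prod>k<m. \<Sum>i\<in>I. monom (c i) i)"
    by simp
  also have "\<dots> = (\<Sum>idx\<in>{..<m} \<rightarrow>\<^sub>E I. \<Prod>k<m. monom (c (idx k)) (idx k))"
    using assms by (intro prod_sum_PiE[where f = "\<lambda>_ i. monom (c i) i"]) auto
  finally show ?thesis
    by (simp add: prod_monom)
qed

lemma pascal_tensor_form_eq_factorial_moment:
  "tensor_form m n (pascal_tensor m) x
     = factorial_moment ((\<Sum>i<n. monom (x i / fact i) i) ^ m)"
  unfolding power_sum_monoms[OF finite_lessThan] factorial_moment_sum tensor_form_def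
    pascal_tensor_def
  by (intro sum.cong refl) (simp add: prod_dividef)

theorem theorem2p3:
  fixes m n :: nat
  assumes "even m" and "m \<ge> 2" and "n \<ge> 2"
  shows "positive_definite_tensor m n (pascal_tensor m)"
  unfolding positive_definite_tensor_def
proof (intro allI impI)
  fix x :: "nat \<Rightarrow> real"
  assume "\<exists>i<n. x i \<noteq> 0"
  then obtain i where "i < n" "x i \<noteq> 0" by blast
  define p where "p = (\<Sum>i<n. monom (x i / fact i) i)"
  have "coeff p i = x i / fact i"
    using \<open>i < n\<close> by (simp add: p_def coeff_sum)
  then have "p \<noteq> 0"
    using \<open>x i \<noteq> 0\<close> by auto
  obtain r where "m = 2 * r"
    using \<open>even m\<close> by blast
  then have "p ^ m = p ^ r * p ^ r"
    by (simp add: mult_2 power_add)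
  then show "tensor_form m n (pascal_tensor m) x > 0"
    using factorial_moment_square_pos[of "p ^ r"] \<open>p \<noteq> 0\<close>
    by (simp add: pascal_tensor_form_eq_factorial_moment p_def)
qed

end
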